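(* Let $\mathbf S$ and $\mathbf T$ be label cover instances such that $\mathbf S\to\pi_{\mathbf P}(\mathbf T)$. Then $\pi_{\mathbf B}(\mathbf S)\to\pi_{\mathbf B}(\mathbf T)$ for every structure $\mathbf B$.
   Context: Structures. A (multisorted relational) signature consists of types and relation symbols, each symbol $R$ having an arity $\mathrm{ar}_R$, a tuple of types. A structure $\mathbf A$ consists of a set $A_t$ per type and relations $R^{\mathbf A}\subseteq A_{\mathrm{ar}_R(1)}\times\dots\times A_{\mathrm{ar}_R(k)}$. A homomorphism is a type-preserving family of maps preserving all relations; write $\mathbf A\to\mathbf B$. For a finite set $X$, $\mathbf B^X$ has domains $B_t^X$ (maps $X\to B_t$) and $(b_1,\dots,b_m)\in R^{\mathbf B^X}$ iff $(b_1(i),\dots,b_m(i))\in R^{\mathbf B}$ for all $i\in X$. Label cover. The label cover signature has a type $X$ for each finite set $X$ and a binary symbol $E_\pi$ of arity $(X,Y)$ for each map $\pi\colon X\to Y$. The label cover template $\mathbf P$ has domain $P_X=X$ for each type $X$ and $E_\pi^{\mathbf P}=\{(x,\pi(x))\mid x\in X\}$. A label cover instance is a structure in this signature with finitely many nonempty domains, all finite. Universal gadget. For a structure $\mathbf B$ (in any signature, possibly the label cover signature itself) and a label cover instance $\mathbf S$, $\pi_{\mathbf B}(\mathbf S)$ is obtained by taking a copy of $\mathbf B^X$ for each element $s$ of type $X$ (elements $(s;b)$, $b\colon X\to B_t$), identifying $(s;b\circ\sigma)$ with $(t;b)$ for each $(s,t)\in E_\sigma^{\mathbf S}$ with $\sigma\colon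 X\to Y$ and each $b\colon Y\to B_u$, and taking the quotient by the generated equivalence relation, with relations the images of those of the copies. In particular $\pi_{\mathbf P}(\mathbf T)$ is a structure in the label cover signature. *)

theory Defs
  imports "HOL-Library.FuncSet"
begin

record ('ty, 'r) msig =
  Tys :: "'ty set"
  Syms :: "'r set"
  arity :: "'r \<Rightarrow> 'ty list"

record ('ty, 'r, 'e) mstruct =
  carr :: "'ty \<Rightarrow> 'e set"
  rels :: "'r \<Rightarrow> 'e list set"

definition is_structure :: "('ty, 'r) msig \<Rightarrow> ('ty, 'r, 'e) mstruct \<Rightarrow> bool" where
  "is_structure sg A \<longleftrightarrow>
     (\<forall>R\<in>Syms sg. set (arity sg R) \<subseteq> Tys sg \<and>
        (\<forall>xs\<in>rels A R. length xs = length (arity sg R) \<and>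
           (\<forall>i<length xs. xs ! i \<in> carr A (arity sg R ! i))))"

definition is_hom :: "('ty, 'r) msig \<Rightarrow> ('ty, 'r, 'e) mstruct \<Rightarrow> ('ty, 'r, 'f) mstruct
                      \<Rightarrow> ('ty \<Rightarrow> 'e \<Rightarrow> 'f) \<Rightarrow> bool" where
  "is_hom sg A B h \<longleftrightarrow>
     (\<forall>t\<in>Tys sg. \<forall>a\<in>carr A t. h t a \<in> carr B t) \<and>
     (\<forall>R\<in>Syms sg. \<forall>xs\<in>rels A R.
        map (\<lambda>i. h (arity sg R ! i) (xs ! i)) [0..<length xs] \<in> rels B R)"

definition hom_exists :: "('ty, 'r) msig \<Rightarrow> ('ty, 'r, 'e) mstruct \<Rightarrow> ('ty, 'r, 'f) mstruct \<Rightarrow> bool" where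
  "hom_exists sg A B \<longleftrightarrow> (\<exists>h. is_hom sg A B h)"

text \<open>Types of the label cover signature: finite sets (taken as finite sets of
  naturals); symbols: triples (X, Y, pi) with pi an (extensional) map X -> Y.\<close>
type_synonym lc_sym = "nat set \<times> nat set \<times> (nat \<Rightarrow> nat)"

definition LC :: "(nat set, lc_sym) msig" where
  "LC = \<lparr>Tys = {X. finite X},
         Syms = {(X, Y, p). finite X \<and> finite Y \<and> p \<in> X \<rightarrow>\<^sub>E Y},
         arity = (\<lambda>(X, Y, p). [X, Y])\<rparr>"

definition LCP :: "(nat set, lc_sym, nat) mstruct" where
  "LCP = \<lparr>carr = (\<lambda>X. X), rels = (\<lambda>(X, Y, p). {[x, p x] | x. x \<in> X})\<rparr>"

definition lc_instance :: "(nat set, lc_sym, 'a) mstruct \<Rightarrow> bool" where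
  "lc_instance S \<longleftrightarrow> is_structure LC S \<and>
     finite {X \<in> Tys LC. carr S X \<noteq> {}} \<and> (\<forall>X\<in>Tys LC. finite (carr S X))"

definition power :: "('ty, 'r) msig \<Rightarrow> ('ty, 'r, 'e) mstruct \<Rightarrow> nat set
                     \<Rightarrow> ('ty, 'r, nat \<Rightarrow> 'e) mstruct" where
  "power sg B X = \<lparr>carr = (\<lambda>t. X \<rightarrow>\<^sub>E carr B t),
     rels = (\<lambda>R. {bs. length bs = length (arity sg R) \<and>
                      (\<forall>i<length bs. bs ! i \<in> X \<rightarrow>\<^sub>E carr B (arity sg R ! i)) \<and>
                      (\<forall>x\<in>X. map (\<lambda>b. b x) bs \<in> rels B R)})\<rparr>"

text \<open>Disjoint union of the copies: element (s; b) with s of type X is the triple (X, s, b).\<close>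
definition gad_base :: "('ty, 'r, 'e) mstruct \<Rightarrow> (nat set, lc_sym, 'a) mstruct \<Rightarrow> 'ty
                        \<Rightarrow> (nat set \<times> 'a \<times> (nat \<Rightarrow> 'e)) set" where
  "gad_base B S u = {(X, s, b). finite X \<and> s \<in> carr S X \<and> b \<in> X \<rightarrow>\<^sub>E carr B u}"

text \<open>Generating identifications: (s; b o sigma) ~ (t; b) for (s,t) in E_sigma.\<close>
definition gad_gen :: "('ty, 'r, 'e) mstruct \<Rightarrow> (nat set, lc_sym, 'a) mstruct \<Rightarrow> 'ty
                       \<Rightarrow> ((nat set \<times> 'a \<times> (nat \<Rightarrow> 'e)) \<times> (nat set \<times> 'a \<times> (nat \<Rightarrow> 'e))) set" where
  "gad_gen B S u = {((X, s, restrict (b \<circ> p) X), (Y, t, b)) | X Y p s t b.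
       (X, Y, p) \<in> Syms LC \<and> [s, t] \<in> rels S (X, Y, p) \<and> b \<in> Y \<rightarrow>\<^sub>E carr B u}"

definition gad_eq :: "('ty, 'r, 'e) mstruct \<Rightarrow> (nat set, lc_sym, 'a) mstruct \<Rightarrow> 'ty
                       \<Rightarrow> ((nat set \<times> 'a \<times> (nat \<Rightarrow> 'e)) \<times> (nat set \<times> 'a \<times> (nat \<Rightarrow> 'e))) set" where
  "gad_eq B S u = (gad_gen B S u \<union> (gad_gen B S u)\<inverse> \<union> Id_on (gad_base B S u))\<^sup>+"

definition gadget :: "('ty, 'r) msig \<Rightarrow> ('ty, 'r, 'e) mstruct \<Rightarrow> (nat set, lc_sym, 'a) mstruct
                      \<Rightarrow> ('ty, 'r, (nat set \<times> 'a \<times> (nat \<Rightarrow> 'e)) set) mstruct" where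
  "gadget sg B S = \<lparr>carr = (\<lambda>u. gad_base B S u // gad_eq B S u),
     rels = (\<lambda>R. {map (\<lambda>i. gad_eq B S (arity sg R ! i) `` {(X, s, bs ! i)}) [0..<length bs]
                   | X s bs. finite X \<and> s \<in> carr S X \<and> bs \<in> rels (power sg B X) R})\<rparr>"

end

theory Submission
  imports Defs
begin

text \<open>A homomorphism \<open>h : S \<rightarrow> \<pi>\<^sub>P(T)\<close> sends an element \<open>s\<close> of type \<open>X\<close> to a class of
  pairs \<open>(t; c)\<close> with \<open>t\<close> of type \<open>Y\<close> in \<open>T\<close> and \<open>c : Y \<rightarrow> X\<close>. The induced map sends the class
  of \<open>(s; b)\<close> to the class of \<open>(t; b \<circ> c)\<close>. Composing with \<open>b\<close> turns the generating
  identifications of \<open>\<pi>\<^sub>P(T)\<close> into those of \<open>\<pi>\<^sub>B(T)\<close>, so the choice of \<open>(t; c)\<close> does not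
  matter; and since \<open>h\<close> preserves \<open>E\<^sub>p\<close>, the images of an edge \<open>(s, s')\<close> have representatives
  \<open>(t; c)\<close> and \<open>(t; p \<circ> c)\<close>, so the identifications of \<open>\<pi>\<^sub>B(S)\<close> are respected as well.
  Relations are preserved because precomposition with \<open>c\<close> maps \<open>B\<^sup>X\<close> homomorphically
  to \<open>B\<^sup>Y\<close>.\<close>

lemma equiv_trancl_sym_closure:
  assumes "r \<subseteq> A \<times> A"
  shows "equiv A ((r \<union> r\<inverse> \<union> Id_on A)\<^sup>+)"
proof (rule equivI)
  have "r \<union> r\<inverse> \<union> Id_on A \<subseteq> A \<times> A" using assms by auto
  then show "(r \<union> r\<inverse> \<union> Id_on A)\<^sup>+ \<subseteq> A \<times> A" by (rule trancl_subset_Sigma)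
  then show "refl_on A ((r \<union> r\<inverse> \<union> Id_on A)\<^sup>+)"
    by (auto simp: refl_on_def intro: r_into_trancl)
  show "sym ((r \<union> r\<inverse> \<union> Id_on A)\<^sup>+)"
    by (rule sym_trancl) (auto simp: sym_def)
qed (rule trans_trancl)

lemma congruent_trancl_sym_closure:
  assumes "f respects r"
  shows "f respects ((r \<union> r\<inverse> \<union> Id_on A)\<^sup>+)"
proof (rule congruentI)
  fix y z assume "(y, z) \<in> (r \<union> r\<inverse> \<union> Id_on A)\<^sup>+"
  then show "f y = f z"
    by (induction rule: trancl_induct) (auto dest: congruentD[OF assms])
qed

lemma lc_edge_carr:
  assumes "is_structure LC S" and "(X, Y, p) \<in> Syms LC" and "[s, t] \<in> rels S (X, Y, p)"
  shows "s \<in> carr S X" and "t \<in> carr S Y"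
proof -
  have "\<forall>i<2. [s, t] ! i \<in> carr S ([X, Y] ! i)"
    using assms unfolding is_structure_def by (auto simp: LC_def)
  from this[rule_format, of 0] this[rule_format, of 1]
  show "s \<in> carr S X" and "t \<in> carr S Y" by simp_all
qed

lemma gad_gen_subset_gad_base:
  assumes "is_structure LC S"
  shows "gad_gen B S u \<subseteq> gad_base B S u \<times> gad_base B S u"
proof (rule subsetI)
  fix e assume "e \<in> gad_gen B S u"
  then obtain X Y p s t b where e: "e = ((X, s, restrict (b \<circ> p) X), (Y, t, b))"
    and edge: "(X, Y, p) \<in> Syms LC" "[s, t] \<in> rels S (X, Y, p)" and b: "b \<in> Y \<rightarrow>\<^sub>E carr B u"
    unfolding gad_gen_def by blast
  have "finite X" "finite Y" "p \<in> X \<rightarrow>\<^sub>E Y" using edge(1) by (auto simp: LC_def)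
  with b lc_edge_carr[OF assms edge] show "e \<in> gad_base B S u \<times> gad_base B S u"
    unfolding e by (auto simp: gad_base_def)
qed

lemma equiv_gad_eq:
  assumes "is_structure LC S"
  shows "equiv (gad_base B S u) (gad_eq B S u)"
  unfolding gad_eq_def using gad_gen_subset_gad_base[OF assms]
  by (rule equiv_trancl_sym_closure)

lemma gad_eq_respects:
  assumes "f respects gad_gen B S u"
  shows "f respects gad_eq B S u"
  unfolding gad_eq_def using assms by (rule congruent_trancl_sym_closure)

definition relabel :: "(nat \<Rightarrow> 'e) \<Rightarrow> nat set \<times> 'b \<times> (nat \<Rightarrow> nat) \<Rightarrow> nat set \<times> 'b \<times> (nat \<Rightarrow> 'e)" where
  "relabel b = (\<lambda>(Y, t, c). (Y, t, restrict (b \<circ> c) Y))"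

lemma relabel_gad_base:
  assumes "z \<in> gad_base LCP T X" and "b \<in> X \<rightarrow>\<^sub>E carr B u"
  shows "relabel b z \<in> gad_base B T u"
  using assms by (auto simp: gad_base_def LCP_def relabel_def PiE_iff)

lemma relabel_gad_gen:
  assumes "b \<in> X \<rightarrow>\<^sub>E carr B u" and "(y, z) \<in> gad_gen LCP T X"
  shows "(relabel b y, relabel b z) \<in> gad_gen B T u"
proof -
  from assms(2) obtain Y Y' p t t' c where
    y: "y = (Y, t, restrict (c \<circ> p) Y)" and z: "z = (Y', t', c)"
    and edge: "(Y, Y', p) \<in> Syms LC" "[t, t'] \<in> rels T (Y, Y', p)"
    and c: "c \<in> Y' \<rightarrow>\<^sub>E X"
    unfolding gad_gen_def by (auto simp: LCP_def)
  have "p \<in> Y \<rightarrow>\<^sub>E Y'" using edge(1) by (auto simp: LC_def)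
  then have "restrict (b \<circ> restrict (c \<circ> p) Y) Y = restrict (restrict (b \<circ> c) Y' \<circ> p) Y"
    by (auto simp: fun_eq_iff)
  moreover have "restrict (b \<circ> c) Y' \<in> Y' \<rightarrow>\<^sub>E carr B u" using assms(1) c by auto
  ultimately show ?thesis
    unfolding y z relabel_def gad_gen_def using edge by fastforce
qed

lemma relabel_class_respects:
  assumes "is_structure LC T" and "b \<in> X \<rightarrow>\<^sub>E carr B u"
  shows "(\<lambda>z. gad_eq B T u `` {relabel b z}) respects gad_eq LCP T X"
proof (rule gad_eq_respects, rule congruentI)
  fix y z assume "(y, z) \<in> gad_gen LCP T X"
  then have "(relabel b y, relabel b z) \<in> gad_eq B T u"
    using relabel_gad_gen[OF assms(2)] unfolding gad_eq_def by blast
  then show "gad_eq B T u `` {relabel b y} = gad_eq B T u `` {relabel b z}"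
    by (rule equiv_class_eq[OF equiv_gad_eq[OF assms(1)]])
qed

text \<open>Both maps are unions over sets on which the summand turns out to be constant; this
  avoids choosing representatives.\<close>

definition gadget_map_rep ::
  "('ty, 'r, 'e) mstruct \<Rightarrow> (nat set, lc_sym, 'b) mstruct
   \<Rightarrow> (nat set \<Rightarrow> 'a \<Rightarrow> (nat set \<times> 'b \<times> (nat \<Rightarrow> nat)) set)
   \<Rightarrow> 'ty \<Rightarrow> nat set \<times> 'a \<times> (nat \<Rightarrow> 'e) \<Rightarrow> (nat set \<times> 'b \<times> (nat \<Rightarrow> 'e)) set" where
  "gadget_map_rep B T h u = (\<lambda>(X, s, b). \<Union>z \<in> h X s. gad_eq B T u `` {relabel b z})"

definition gadget_map ::
  "('ty, 'r, 'e) mstruct \<Rightarrow> (nat set, lc_sym, 'b) mstruct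
   \<Rightarrow> (nat set \<Rightarrow> 'a \<Rightarrow> (nat set \<times> 'b \<times> (nat \<Rightarrow> nat)) set)
   \<Rightarrow> 'ty \<Rightarrow> (nat set \<times> 'a \<times> (nat \<Rightarrow> 'e)) set \<Rightarrow> (nat set \<times> 'b \<times> (nat \<Rightarrow> 'e)) set" where
  "gadget_map B T h u C = (\<Union>e \<in> C. gadget_map_rep B T h u e)"

lemma gadget_map_rep_class:
  assumes "is_structure LC T" and "z \<in> gad_base LCP T X" and "h X s = gad_eq LCP T X `` {z}"
    and "b \<in> X \<rightarrow>\<^sub>E carr B u"
  shows "gadget_map_rep B T h u (X, s, b) = gad_eq B T u `` {relabel b z}"
  using UN_equiv_class[OF equiv_gad_eq[OF assms(1)] relabel_class_respects[OF assms(1,4)] assms(2)]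
  by (simp add: gadget_map_rep_def assms(3))

lemma hom_gadget_LCP_carr:
  assumes "is_hom LC S (gadget LC LCP T) h" and "finite X" and "s \<in> carr S X"
  shows "h X s \<in> gad_base LCP T X // gad_eq LCP T X"
  using assms unfolding is_hom_def by (auto simp: LC_def gadget_def)

lemma hom_gadget_LCP_edge:
  assumes "is_hom LC S (gadget LC LCP T) h"
    and "(X, X', p) \<in> Syms LC" and "[s, s'] \<in> rels S (X, X', p)"
  obtains Z t c where "(Z, t, c) \<in> gad_base LCP T X"
    and "h X s = gad_eq LCP T X `` {(Z, t, c)}"
    and "h X' s' = gad_eq LCP T X' `` {(Z, t, restrict (p \<circ> c) Z)}"
proof -
  have arity: "arity LC (X, X', p) = [X, X']" by (simp add: LC_def)
  have "map (\<lambda>i. h (arity LC (X, X', p) ! i) ([s, s'] ! i)) [0..<length [s, s']] \<in> rels (gadget LC LCP T) (X, X', p)"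
    using assms unfolding is_hom_def by blast
  then have "[h X s, h X' s'] \<in> rels (gadget LC LCP T) (X, X', p)"
    by (simp add: arity upt_rec)
  then obtain Z t cs where
    h: "[h X s, h X' s'] = map (\<lambda>i. gad_eq LCP T ([X, X'] ! i) `` {(Z, t, cs ! i)}) [0..<length cs]"
    and Z: "finite Z" "t \<in> carr T Z" and cs: "cs \<in> rels (power LC LCP Z) (X, X', p)"
    using that unfolding gadget_def mstruct.simps arity mem_Collect_eq by (elim exE conjE) iprover
  have "length cs = 2" using cs by (simp add: power_def LC_def)
  then obtain c c' where cs_eq: "cs = [c, c']" by (auto simp: numeral_2_eq_2 length_Suc_conv)
  have c: "c \<in> Z \<rightarrow>\<^sub>E X" and c': "c' \<in> Z \<rightarrow>\<^sub>E X'"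
    and edge: "\<forall>z\<in>Z. [c z, c' z] \<in> {[x, p x] | x. x \<in> X}"
    using cs unfolding cs_eq by (auto simp: power_def LC_def LCP_def less_Suc_eq)
  have "c' = restrict (p \<circ> c) Z"
  proof
    fix z show "c' z = restrict (p \<circ> c) Z z"
      using edge c' by (cases "z \<in> Z") auto
  qed
  moreover have "(Z, t, c) \<in> gad_base LCP T X"
    using Z c by (simp add: gad_base_def LCP_def)
  ultimately show thesis
    using that h unfolding cs_eq by (simp add: upt_rec)
qed
lemma gadget_map_rep_respects:
  assumes "is_structure LC S" and "is_structure LC T" and hom: "is_hom LC S (gadget LC LCP T) h"
  shows "gadget_map_rep B T h u respects gad_gen B S u"
proof (rule congruentI)
  fix e e' assume "(e, e') \<in> gad_gen B S u"
  then obtain X X' p s s' b where e: "e = (X, s, restrict (b \<circ> p) X)" and e': "e' = (X', s', b)"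
    and edge: "(X, X', p) \<in> Syms LC" "[s, s'] \<in> rels S (X, X', p)" and b: "b \<in> X' \<rightarrow>\<^sub>E carr B u"
    unfolding gad_gen_def by blast
  obtain Z t c where z: "(Z, t, c) \<in> gad_base LCP T X"
    and hs: "h X s = gad_eq LCP T X `` {(Z, t, c)}"
    and hs': "h X' s' = gad_eq LCP T X' `` {(Z, t, restrict (p \<circ> c) Z)}"
    using hom_gadget_LCP_edge[OF hom edge] .
  have p: "p \<in> X \<rightarrow>\<^sub>E X'" using edge(1) by (simp add: LC_def)
  then have z': "(Z, t, restrict (p \<circ> c) Z) \<in> gad_base LCP T X'"
    using z by (auto simp: gad_base_def LCP_def)
  have bp: "restrict (b \<circ> p) X \<in> X \<rightarrow>\<^sub>E carr B u" using b p by auto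
  have "gadget_map_rep B T h u e = gad_eq B T u `` {relabel (restrict (b \<circ> p) X) (Z, t, c)}"
    unfolding e using assms(2) z hs bp by (rule gadget_map_rep_class)
  also have "relabel (restrict (b \<circ> p) X) (Z, t, c) = relabel b (Z, t, restrict (p \<circ> c) Z)"
    using z by (auto simp: relabel_def gad_base_def LCP_def fun_eq_iff)
  also have "gad_eq B T u `` {\<dots>} = gadget_map_rep B T h u e'"
    unfolding e' using assms(2) z' hs' b by (rule gadget_map_rep_class[symmetric])
  finally show "gadget_map_rep B T h u e = gadget_map_rep B T h u e'" .
qed

lemma gadget_map_class:
  assumes "is_structure LC S" and "is_structure LC T" and "is_hom LC S (gadget LC LCP T) h"
    and "e \<in> gad_base B S u"
  shows "gadget_map B T h u (gad_eq B S u `` {e}) = gadget_map_rep B T h u e"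
  unfolding gadget_map_def
  using equiv_gad_eq[OF assms(1)] gad_eq_respects[OF gadget_map_rep_respects[OF assms(1-3)]] assms(4)
  by (rule UN_equiv_class)

lemma power_rels_precompose:
  assumes "bs \<in> rels (power sg B X) R" and "c \<in> Y \<rightarrow>\<^sub>E X"
  shows "map (\<lambda>b. restrict (b \<circ> c) Y) bs \<in> rels (power sg B Y) R"
proof -
  have "\<forall>y\<in>Y. map (\<lambda>b. b (c y)) bs \<in> rels B R"
    using assms by (auto simp: power_def)
  then show ?thesis
    using assms by (auto simp: power_def PiE_iff comp_def)
qed

lemma gadget_map_relabel:
  assumes "is_structure LC S" and "is_structure LC T" and "is_hom LC S (gadget LC LCP T) h"
    and "(X, s, b) \<in> gad_base B S u"
    and "z \<in> gad_base LCP T X" and "h X s = gad_eq LCP T X `` {z}"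
  shows "gadget_map B T h u (gad_eq B S u `` {(X, s, b)}) = gad_eq B T u `` {relabel b z}"
proof -
  have "b \<in> X \<rightarrow>\<^sub>E carr B u" using assms(4) by (simp add: gad_base_def)
  with assms(2,5,6) have "gadget_map_rep B T h u (X, s, b) = gad_eq B T u `` {relabel b z}"
    by (rule gadget_map_rep_class)
  then show ?thesis using gadget_map_class[OF assms(1-4)] by simp
qed

lemma gadget_map_carr:
  assumes "is_structure LC S" and "is_structure LC T" and hom: "is_hom LC S (gadget LC LCP T) h"
    and "C \<in> carr (gadget sg B S) u"
  shows "gadget_map B T h u C \<in> carr (gadget sg B T) u"
proof -
  obtain X s b where C: "C = gad_eq B S u `` {(X, s, b)}" and e: "(X, s, b) \<in> gad_base B S u"
    using assms(4) by (auto simp: gadget_def elim!: quotientE)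
  then have X: "finite X" "s \<in> carr S X" and b: "b \<in> X \<rightarrow>\<^sub>E carr B u"
    by (auto simp: gad_base_def)
  obtain z where z: "z \<in> gad_base LCP T X" and hs: "h X s = gad_eq LCP T X `` {z}"
    using hom_gadget_LCP_carr[OF hom X] by (rule quotientE)
  have "relabel b z \<in> gad_base B T u" using z b by (rule relabel_gad_base)
  then show ?thesis
    unfolding C gadget_map_relabel[OF assms(1-3) e z hs] by (simp add: gadget_def quotientI)
qed

lemma gadget_map_rels:
  assumes "is_structure LC S" and "is_structure LC T" and hom: "is_hom LC S (gadget LC LCP T) h"
    and "xs \<in> rels (gadget sg B S) R"
  shows "map (\<lambda>i. gadget_map B T h (arity sg R ! i) (xs ! i)) [0..<length xs] \<in> rels (gadget sg B T) R"
proof -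
  obtain X s bs where xs: "xs = map (\<lambda>i. gad_eq B S (arity sg R ! i) `` {(X, s, bs ! i)}) [0..<length bs]"
    and X: "finite X" "s \<in> carr S X" and bs: "bs \<in> rels (power sg B X) R"
    using assms(4) by (auto simp: gadget_def)
  obtain Y t c where z: "(Y, t, c) \<in> gad_base LCP T X" and hs: "h X s = gad_eq LCP T X `` {(Y, t, c)}"
    using hom_gadget_LCP_carr[OF hom X] by (auto elim!: quotientE)
  have Y: "finite Y" "t \<in> carr T Y" and c: "c \<in> Y \<rightarrow>\<^sub>E X"
    using z by (auto simp: gad_base_def LCP_def)
  define cs where "cs = map (\<lambda>b. restrict (b \<circ> c) Y) bs"
  have "gadget_map B T h (arity sg R ! i) (xs ! i) = gad_eq B T (arity sg R ! i) `` {(Y, t, cs ! i)}"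
    if i: "i < length bs" for i
  proof -
    have "(X, s, bs ! i) \<in> gad_base B S (arity sg R ! i)"
      using X bs i by (auto simp: gad_base_def power_def)
    from gadget_map_relabel[OF assms(1-3) this z hs] show ?thesis
      using i by (simp add: xs cs_def relabel_def)
  qed
  then have "map (\<lambda>i. gadget_map B T h (arity sg R ! i) (xs ! i)) [0..<length xs]
      = map (\<lambda>i. gad_eq B T (arity sg R ! i) `` {(Y, t, cs ! i)}) [0..<length cs]"
    by (simp add: xs cs_def)
  moreover have "cs \<in> rels (power sg B Y) R"
    unfolding cs_def using bs c by (rule power_rels_precompose)
  ultimately show ?thesis
    using Y unfolding gadget_def by auto
qed

lemma is_hom_gadget_map:
  assumes "is_structure LC S" and "is_structure LC T" and "is_hom LC S (gadget LC LCP T) h"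
  shows "is_hom sg (gadget sg B S) (gadget sg B T) (gadget_map B T h)"
  unfolding is_hom_def by (simp add: gadget_map_carr[OF assms] gadget_map_rels[OF assms])

theorem mainTheorem17:
  fixes S :: "(nat set, lc_sym, 'a) mstruct"
    and T :: "(nat set, lc_sym, 'b) mstruct"
    and sg :: "('ty, 'r) msig"
    and B :: "('ty, 'r, 'e) mstruct"
  assumes "lc_instance S"
    and "lc_instance T"
    and "hom_exists LC S (gadget LC LCP T)"
    and "is_structure sg B"
  shows "hom_exists sg (gadget sg B S) (gadget sg B T)"
proof -
  obtain h where "is_hom LC S (gadget LC LCP T) h"
    using assms(3) unfolding hom_exists_def by blast
  moreover have "is_structure LC S" "is_structure LC T"
    using assms(1,2) unfolding lc_instance_def by blast+
  ultimately show ?thesis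
    unfolding hom_exists_def by (blast intro: is_hom_gadget_map)
qed
end
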